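(* Let $G_{\max}=(V,E_{\max})$ be a finite, simple, connected, undirected graph, and let $\lambda',\mu',\gamma'>0$ with $\frac{\lambda'}{\mu'}>1$ and $0<\gamma'\le 1$ (Regime III). For a network state $\mathbf{A}$ (a subset $E(\mathbf{A})\subseteq E_{\max}$ of closed edges) let $g(E(\mathbf{A}))$ be the number of $P_3$ subgraphs (paths with 3 vertices) formed by $E(\mathbf{A})$, and call a maximizer of $\pi(\mathbf{A})\propto(\lambda'/\mu')^{|E(\mathbf{A})|}\gamma'^{\,g(E(\mathbf{A}))}$ over all network states a most-probable network (for SUD-DBP). If $\lambda'\gamma'<\mu'$, then the most-probable networks are exactly the network states $\mathbf{A}^*$ with $g(E(\mathbf{A}^* ))=0$ and $|E(\mathbf{A}^* )|$ maximum among such states; equivalently, $E(\mathbf{A}^* )$ is a maximum matching of $G_{\max}$.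
   Context: A matching of a graph is a set of edges no two of which share a vertex; a maximum matching is a matching with the largest possible number of edges. *)

theory Defs
  imports Complex_Main
begin

definition simple_graph :: "'a set \<Rightarrow> 'a set set \<Rightarrow> bool" where
  "simple_graph V E \<longleftrightarrow> finite V \<and>
     (\<forall>e\<in>E. \<exists>u v. u \<noteq> v \<and> u \<in> V \<and> v \<in> V \<and> e = {u, v})"

definition adj :: "'a set set \<Rightarrow> 'a \<Rightarrow> 'a \<Rightarrow> bool" where
  "adj E u v \<longleftrightarrow> {u, v} \<in> E"

definition connected_graph :: "'a set \<Rightarrow> 'a set set \<Rightarrow> bool" where
  "connected_graph V E \<longleftrightarrow> V \<noteq> {} \<and>
     (\<forall>u\<in>V. \<forall>v\<in>V. (adj E)\<^sup>*\<^sup>* u v)"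

text \<open>Number of P3 subgraphs formed by an edge set: unordered pairs of distinct
  edges sharing a vertex (each such pair spans exactly one path on 3 vertices).\<close>
definition num_P3 :: "'a set set \<Rightarrow> nat" where
  "num_P3 E = card {p. \<exists>e1 e2. p = {e1, e2} \<and> e1 \<in> E \<and> e2 \<in> E \<and> e1 \<noteq> e2 \<and> e1 \<inter> e2 \<noteq> {}}"

text \<open>Unnormalised stationary weight; pi(A) is proportional to this.\<close>
definition weight :: "real \<Rightarrow> real \<Rightarrow> real \<Rightarrow> 'a set set \<Rightarrow> real" where
  "weight lam mu gam A = (lam / mu) ^ card A * gam ^ num_P3 A"

definition most_probable :: "'a set set \<Rightarrow> real \<Rightarrow> real \<Rightarrow> real \<Rightarrow> 'a set set \<Rightarrow> bool" where
  "most_probable Emax lam mu gam A \<longleftrightarrow> A \<subseteq> Emax \<and>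
     (\<forall>B. B \<subseteq> Emax \<longrightarrow> weight lam mu gam B \<le> weight lam mu gam A)"

definition matching :: "'a set set \<Rightarrow> 'a set set \<Rightarrow> bool" where
  "matching E M \<longleftrightarrow> M \<subseteq> E \<and> (\<forall>e1\<in>M. \<forall>e2\<in>M. e1 \<noteq> e2 \<longrightarrow> e1 \<inter> e2 = {})"

definition maximum_matching :: "'a set set \<Rightarrow> 'a set set \<Rightarrow> bool" where
  "maximum_matching E M \<longleftrightarrow> matching E M \<and> (\<forall>M'. matching E M' \<longrightarrow> card M' \<le> card M)"

end

theory Submission
  imports Defs
begin

text \<open>Deleting one edge of a \<open>P\<^sub>3\<close> multiplies the weight by at least
  \<open>\<mu>'/(\<lambda>'\<gamma>') > 1\<close>, since it removes one factor \<open>\<lambda>'/\<mu>'\<close> and at least one factor \<open>\<gamma>'\<close>.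
  Hence every state is dominated by a \<open>P\<^sub>3\<close>-free subset, i.e. a matching, and on matchings
  the weight \<open>(\<lambda>'/\<mu>')\<^bsup>|A|\<^esup>\<close> is strictly increasing in \<open>|A|\<close>.\<close>

definition P3_pairs :: "'a set set \<Rightarrow> 'a set set set" where
  "P3_pairs E = {p. \<exists>e1 e2. p = {e1, e2} \<and> e1 \<in> E \<and> e2 \<in> E \<and> e1 \<noteq> e2 \<and> e1 \<inter> e2 \<noteq> {}}"

lemma num_P3_eq_card_P3_pairs: "num_P3 E = card (P3_pairs E)"
  unfolding num_P3_def P3_pairs_def ..

lemma finite_P3_pairs: "finite E \<Longrightarrow> finite (P3_pairs E)"
  by (rule finite_subset[of _ "Pow E"]) (auto simp: P3_pairs_def)

lemma num_P3_eq_0_iff: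
  "finite E \<Longrightarrow> num_P3 E = 0 \<longleftrightarrow> (\<forall>e1\<in>E. \<forall>e2\<in>E. e1 \<noteq> e2 \<longrightarrow> e1 \<inter> e2 = {})"
  unfolding num_P3_eq_card_P3_pairs using finite_P3_pairs[of E] by (auto simp: P3_pairs_def)

lemma num_P3_Diff_less:
  assumes "finite E" "e1 \<in> E" "e2 \<in> E" "e1 \<noteq> e2" "e1 \<inter> e2 \<noteq> {}"
  shows "num_P3 (E - {e1}) < num_P3 E"
proof -
  have "P3_pairs (E - {e1}) \<subseteq> P3_pairs E" by (auto simp: P3_pairs_def)
  moreover have "{e1, e2} \<in> P3_pairs E - P3_pairs (E - {e1})"
    using assms by (auto simp: P3_pairs_def doubleton_eq_iff)
  ultimately have "P3_pairs (E - {e1}) \<subset> P3_pairs E" by blast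
  then show ?thesis
    unfolding num_P3_eq_card_P3_pairs by (rule psubset_card_mono[OF finite_P3_pairs[OF assms(1)]])
qed

lemma weight_less_weight_Diff:
  assumes "finite A" "num_P3 A > 0"
    and r: "lam / mu > 0" and g: "0 < gam" "gam \<le> 1" and rg: "lam / mu * gam < 1"
  shows "\<exists>e\<in>A. weight lam mu gam A < weight lam mu gam (A - {e})"
proof -
  define r where "r = lam / mu"
  obtain e1 e2 where e: "e1 \<in> A" "e2 \<in> A" "e1 \<noteq> e2" "e1 \<inter> e2 \<noteq> {}"
    using assms(2) num_P3_eq_0_iff[OF assms(1)] by auto
  obtain n where n: "card A = Suc n" "card (A - {e1}) = n"
    using e(1) assms(1) by (cases "card A") (auto simp: card_Suc_eq_finite)
  obtain k where k: "num_P3 A = Suc k" "num_P3 (A - {e1}) \<le> k"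
    using num_P3_Diff_less[OF assms(1) e] by (cases "num_P3 A") auto
  have pos: "0 < r ^ n * gam ^ k" using r g by (simp add: r_def)
  have "weight lam mu gam A = (r * gam) * (r ^ n * gam ^ k)"
    using n k by (simp add: weight_def r_def algebra_simps)
  also have "\<dots> < r ^ n * gam ^ k"
    using mult_strict_right_mono[OF rg pos] by (simp add: r_def)
  also have "\<dots> \<le> r ^ n * gam ^ num_P3 (A - {e1})"
    using r g k by (intro mult_left_mono power_decreasing) (auto simp: r_def)
  also have "\<dots> = weight lam mu gam (A - {e1})"
    using n by (simp add: weight_def r_def)
  finally show ?thesis using e(1) by blast
qed

lemma exists_P3_free_subset_weight_ge:
  assumes "finite B"
    and "lam / mu > 0" "0 < gam" "gam \<le> 1" "lam / mu * gam < 1"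
  shows "\<exists>C\<subseteq>B. num_P3 C = 0 \<and> weight lam mu gam B \<le> weight lam mu gam C"
  using assms(1)
proof (induction B rule: finite_psubset_induct)
  case (psubset B)
  show ?case
  proof (cases "num_P3 B = 0")
    case False
    then obtain e where "e \<in> B" and less: "weight lam mu gam B < weight lam mu gam (B - {e})"
      using weight_less_weight_Diff[OF psubset.hyps(1) _ assms(2-)] by auto
    then obtain C where "C \<subseteq> B - {e}" "num_P3 C = 0"
      "weight lam mu gam (B - {e}) \<le> weight lam mu gam C"
      using psubset.IH[of "B - {e}"] by blast
    with less show ?thesis by (meson Diff_subset less_le_not_le order.trans)
  qed auto
qed

lemma most_probable_iff_max_P3_free:
  assumes "finite Emax"
    and r: "lam / mu > 1" and "0 < gam" "gam \<le> 1" "lam / mu * gam < 1"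
  shows "most_probable Emax lam mu gam A \<longleftrightarrow>
           A \<subseteq> Emax \<and> num_P3 A = 0 \<and>
           (\<forall>B. B \<subseteq> Emax \<and> num_P3 B = 0 \<longrightarrow> card B \<le> card A)"
proof -
  have weight_P3_free: "weight lam mu gam C = (lam / mu) ^ card C" if "num_P3 C = 0" for C
    using that by (simp add: weight_def)
  have weight_le_iff: "(lam / mu) ^ a \<le> (lam / mu) ^ b \<longleftrightarrow> a \<le> b" for a b :: nat
    using r by simp
  have fin: "finite B" if "B \<subseteq> Emax" for B
    using that assms(1) finite_subset by blast
  show ?thesis
  proof
    assume mp: "most_probable Emax lam mu gam A"
    then have AE: "A \<subseteq> Emax"
      and le: "\<And>B. B \<subseteq> Emax \<Longrightarrow> weight lam mu gam B \<le> weight lam mu gam A"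
      unfolding most_probable_def by auto
    have A0: "num_P3 A = 0"
    proof (rule ccontr)
      assume "num_P3 A \<noteq> 0"
      then obtain e where "weight lam mu gam A < weight lam mu gam (A - {e})"
        using weight_less_weight_Diff[OF fin[OF AE] _ _ assms(3-)] r by auto
      with le[of "A - {e}"] AE show False by auto
    qed
    moreover have "card B \<le> card A" if "B \<subseteq> Emax" "num_P3 B = 0" for B
      using le[OF that(1)] that(2) A0 by (simp add: weight_P3_free weight_le_iff)
    ultimately show "A \<subseteq> Emax \<and> num_P3 A = 0 \<and>
        (\<forall>B. B \<subseteq> Emax \<and> num_P3 B = 0 \<longrightarrow> card B \<le> card A)"
      using AE by blast
  next
    assume A: "A \<subseteq> Emax \<and> num_P3 A = 0 \<and>
        (\<forall>B. B \<subseteq> Emax \<and> num_P3 B = 0 \<longrightarrow> card B \<le> card A)"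
    have "weight lam mu gam B \<le> weight lam mu gam A" if B: "B \<subseteq> Emax" for B
    proof -
      obtain C where C: "C \<subseteq> B" "num_P3 C = 0" "weight lam mu gam B \<le> weight lam mu gam C"
        using exists_P3_free_subset_weight_ge[OF fin[OF B] _ assms(3-)] r by auto
      have "card C \<le> card A" using A C B by auto
      then have "weight lam mu gam C \<le> weight lam mu gam A"
        using A C by (simp add: weight_P3_free weight_le_iff)
      with C(3) show ?thesis by linarith
    qed
    then show "most_probable Emax lam mu gam A"
      using A unfolding most_probable_def by blast
  qed
qed

lemma matching_iff_P3_free:
  assumes "finite E" shows "matching E M \<longleftrightarrow> M \<subseteq> E \<and> num_P3 M = 0"
proof (cases "M \<subseteq> E")
  case True
  then show ?thesis
    using num_P3_eq_0_iff[OF finite_subset[OF True assms]] by (simp add: matching_def)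
qed (simp add: matching_def)

lemma maximum_matching_iff_max_P3_free:
  "finite E \<Longrightarrow> maximum_matching E M \<longleftrightarrow>
     M \<subseteq> E \<and> num_P3 M = 0 \<and> (\<forall>B. B \<subseteq> E \<and> num_P3 B = 0 \<longrightarrow> card B \<le> card M)"
  unfolding maximum_matching_def by (auto simp: matching_iff_P3_free)

lemma finite_edges_if_simple_graph:
  assumes "simple_graph V E" shows "finite E"
proof -
  have "E \<subseteq> Pow V" using assms unfolding simple_graph_def by force
  moreover have "finite V" using assms unfolding simple_graph_def by simp
  ultimately show ?thesis by (rule finite_subset[OF _ finite_Pow_iff[THEN iffD2]])
qed

theorem theorem6:
  fixes V :: "'a set" and Emax :: "'a set set" and lam mu gam :: real
  assumes "simple_graph V Emax" and "connected_graph V Emax"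
    and "lam > 0" and "mu > 0" and "gam > 0"
    and "lam / mu > 1" and "gam \<le> 1"
    and "lam * gam < mu"
  shows "(\<forall>A. most_probable Emax lam mu gam A \<longleftrightarrow>
            (A \<subseteq> Emax \<and> num_P3 A = 0 \<and>
             (\<forall>B. B \<subseteq> Emax \<and> num_P3 B = 0 \<longrightarrow> card B \<le> card A)))
       \<and> (\<forall>A. most_probable Emax lam mu gam A \<longleftrightarrow> maximum_matching Emax A)"
proof -
  have fin: "finite Emax" using assms(1) by (rule finite_edges_if_simple_graph)
  have "lam / mu * gam < 1" using assms(4,8) by (simp add: field_simps)
  note most_probable = most_probable_iff_max_P3_free[OF fin assms(6,5,7) this]
  show ?thesis
    unfolding most_probable maximum_matching_iff_max_P3_free[OF fin] by simp
qed

end
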